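(* Let $D\subset\mathbb{R}^2$ be the open unit disk centered at the origin. There is no constant $C$ such that for every $f\in L^1(D)$ there exists ${\bf u}\in W^{1,1}_0(D)^2$ with $\operatorname{div}{\bf u}=f-\bar f$ in $D$ and $\|{\bf u}\|_{W^{1,1}(D)}\le C\|f\|_{L^1(D)}$, where $\bar f=\frac{1}{|D|}\int_D f$.
   Context: $W^{1,1}(D)$ denotes the Sobolev space of $L^1(D)$ functions with first weak derivatives in $L^1(D)$, and $W^{1,1}_0(D)$ its subspace of functions vanishing on $\partial D$ (closure of $C_0^\infty(D)$). *)

theory Defs
  imports "HOL-Analysis.Analysis"
begin

definition unit_disk :: "(real^2) set" where
  "unit_disk = ball 0 1"

definition pd :: "2 \<Rightarrow> (real^2 \<Rightarrow> real) \<Rightarrow> real^2 \<Rightarrow> real" where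
  "pd i f x = deriv (\<lambda>t. f (x + t *\<^sub>R axis i 1)) 0"

fun iter_pd :: "2 list \<Rightarrow> (real^2 \<Rightarrow> real) \<Rightarrow> real^2 \<Rightarrow> real" where
  "iter_pd [] f = f"
| "iter_pd (i # is) f = pd i (iter_pd is f)"

definition smooth :: "(real^2 \<Rightarrow> real) \<Rightarrow> bool" where
  "smooth f \<longleftrightarrow> (\<forall>is. continuous_on UNIV (iter_pd is f) \<and>
     (\<forall>i x. (\<lambda>t. iter_pd is f (x + t *\<^sub>R axis i 1)) differentiable (at 0)))"

definition test_fun :: "(real^2) set \<Rightarrow> (real^2 \<Rightarrow> real) \<Rightarrow> bool" where
  "test_fun D \<phi> \<longleftrightarrow> smooth \<phi> \<and> (\<exists>K. compact K \<and> K \<subseteq> D \<and> (\<forall>x. x \<notin> K \<longrightarrow> \<phi> x = 0))"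

definition weak_pd :: "(real^2) set \<Rightarrow> (real^2 \<Rightarrow> real) \<Rightarrow> 2 \<Rightarrow> (real^2 \<Rightarrow> real) \<Rightarrow> bool" where
  "weak_pd D u i g \<longleftrightarrow> (\<forall>\<phi>. test_fun D \<phi> \<longrightarrow>
     (LINT x:D|lborel. u x * pd i \<phi> x) = - (LINT x:D|lborel. g x * \<phi> x))"

definition W11 :: "(real^2) set \<Rightarrow> (real^2 \<Rightarrow> real) \<Rightarrow> bool" where
  "W11 D u \<longleftrightarrow> set_integrable lborel D u \<and>
     (\<forall>i. \<exists>g. set_integrable lborel D g \<and> weak_pd D u i g)"

text \<open>The (a.e. unique) weak partial derivative in L^1(D).\<close>
definition wpd :: "(real^2) set \<Rightarrow> (real^2 \<Rightarrow> real) \<Rightarrow> 2 \<Rightarrow> real^2 \<Rightarrow> real" where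
  "wpd D u i = (SOME g. set_integrable lborel D g \<and> weak_pd D u i g)"

definition L1_norm :: "(real^2) set \<Rightarrow> (real^2 \<Rightarrow> real) \<Rightarrow> real" where
  "L1_norm D f = (LINT x:D|lborel. \<bar>f x\<bar>)"

definition W11_norm :: "(real^2) set \<Rightarrow> (real^2 \<Rightarrow> real) \<Rightarrow> real" where
  "W11_norm D u = L1_norm D u + (\<Sum>i\<in>UNIV. L1_norm D (wpd D u i))"

definition W11_0 :: "(real^2) set \<Rightarrow> (real^2 \<Rightarrow> real) \<Rightarrow> bool" where
  "W11_0 D u \<longleftrightarrow> W11 D u \<and> (\<exists>\<phi>. (\<forall>n. test_fun D (\<phi> n)) \<and>
      (\<lambda>n. W11_norm D (\<lambda>x. \<phi> n x - u x)) \<longlonglongrightarrow> 0)"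

definition mean_value :: "(real^2) set \<Rightarrow> (real^2 \<Rightarrow> real) \<Rightarrow> real" where
  "mean_value D f = (LINT x:D|lborel. f x) / measure lborel D"

end

theory Submission
  imports Defs "HOL-Computational_Algebra.Polynomial"
begin

text \<open>If \<open>div u = f\<close> with \<open>u \<in> W\<^sup>1\<^sup>,\<^sup>1\<close> and \<open>\<psi>, G\<^sub>1, G\<^sub>2\<close> are test functions with
  \<open>\<partial>\<^sub>1\<psi> = \<partial>\<^sub>2G\<^sub>1\<close> and \<open>\<partial>\<^sub>2\<psi> = \<partial>\<^sub>1G\<^sub>2\<close>, integrating by parts twice gives
  \<open>\<integral>f\<psi> = \<integral>\<partial>\<^sub>2u\<^sub>1 G\<^sub>1 + \<integral>\<partial>\<^sub>1u\<^sub>2 G\<^sub>2 \<le> sup|G| \<parallel>u\<parallel>\<^sub>W\<^sub>1\<^sub>,\<^sub>1\<close>, so a bound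
  \<open>\<parallel>u\<parallel>\<^sub>W\<^sub>1\<^sub>,\<^sub>1 \<le> C\<parallel>f\<parallel>\<^sub>1\<close> would give \<open>|\<integral>f\<psi>| \<le> C sup|G| \<parallel>f\<parallel>\<^sub>1\<close> whenever \<open>\<integral>f = 0\<close>.
  Ornstein's example defeats this: with a smooth bump \<open>a\<close> on \<open>[-1/2, 1/2]\<close> having a compactly
  supported primitive \<open>B\<close>, \<open>a(0) > 0\<close> and \<open>a'(0) = 0\<close>, take
  \<open>\<psi>\<^sub>N(x,y) = \<Sum>\<^sub>k\<^sub><\<^sub>N a(2\<^sup>kx) a(2\<^sup>ky)\<close>, \<open>G\<^sub>1 = \<Sum>\<^sub>k\<^sub><\<^sub>N a'(2\<^sup>kx) B(2\<^sup>ky)\<close> and \<open>G\<^sub>2\<close> symmetrically.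
  Since \<open>|a'(t)| \<le> L|t|\<close>, the sums \<open>\<Sum>\<^sub>k |a'(2\<^sup>kx)|\<close> are geometric, so the \<open>G\<^sub>i\<close> are bounded
  uniformly in \<open>N\<close>, while \<open>\<psi>\<^sub>N \<ge> cN\<close> on a square around the origin. Testing with the difference
  of the indicators of that square and of a translate outside \<open>supp \<psi>\<^sub>N\<close> gives
  \<open>cN \<le> 2 C sup|G|\<close> for every \<open>N\<close>.\<close>

section \<open>Flat functions and one-variable smoothness\<close>

lemma poly_div_exp_tendsto_0: "((\<lambda>s. poly p s / exp s) \<longlongrightarrow> (0::real)) at_top"
proof -
  have "((\<lambda>s. \<Sum>i\<le>degree p. coeff p i * (s ^ i / exp s)) \<longlongrightarrow> (\<Sum>i\<le>degree p. coeff p i * 0)) at_top"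
    by (intro tendsto_sum tendsto_mult tendsto_const tendsto_power_div_exp_0)
  then show ?thesis by (simp add: poly_altdef sum_divide_distrib)
qed

lemma poly_inverse_mult_exp_tendsto_0:
  "((\<lambda>t. poly p (1/t) * exp (-1/t)) \<longlongrightarrow> (0::real)) (at_right 0)"
proof -
  have "((\<lambda>t. poly p (inverse t) / exp (inverse t)) \<longlongrightarrow> (0::real)) (at_right 0)"
    using filterlim_compose[OF poly_div_exp_tendsto_0 filterlim_inverse_at_top_right]
    by (simp add: o_def)
  then show ?thesis by (simp add: exp_minus divide_inverse)
qed

definition exp_inv_poly :: "real poly \<Rightarrow> real \<Rightarrow> real" where
  "exp_inv_poly p t = (if t > 0 then poly p (1/t) * exp (-1/t) else 0)"

text \<open>Differentiating \<open>p(1/t) e\<^sup>-\<^sup>1\<^sup>/\<^sup>t\<close> gives \<open>q(1/t) e\<^sup>-\<^sup>1\<^sup>/\<^sup>t\<close> with \<open>q(s) = s\<^sup>2 (p(s) - p'(s))\<close>,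
  so this family is closed under differentiation, also at the flat point \<open>0\<close>.\<close>
definition exp_inv_poly_deriv :: "real poly \<Rightarrow> real poly" where
  "exp_inv_poly_deriv p = monom 1 2 * (p - pderiv p)"

lemma exp_inv_poly_has_derivative_pos:
  assumes "x > 0"
  shows "(exp_inv_poly p has_real_derivative exp_inv_poly (exp_inv_poly_deriv p) x) (at x)"
proof -
  have "((\<lambda>t. poly p (1/t) * exp (-1/t)) has_real_derivative
       poly (pderiv p) (1/x) * (- 1/x^2) * exp (-1/x) + poly p (1/x) * (exp (-1/x) * (1/x^2))) (at x)"
    using assms
    by (auto intro!: derivative_eq_intros DERIV_chain2[OF poly_DERIV]
        simp: power2_eq_square field_simps)
  also have "poly (pderiv p) (1/x) * (- 1/x^2) * exp (-1/x) + poly p (1/x) * (exp (-1/x) * (1/x^2))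
       = exp_inv_poly (exp_inv_poly_deriv p) x"
    using assms
    by (simp add: exp_inv_poly_def exp_inv_poly_deriv_def poly_monom algebra_simps power2_eq_square)
  finally show ?thesis
    by (rule has_field_derivative_transform_within_open[where S="{0<..}"])
       (use assms in \<open>auto simp: exp_inv_poly_def\<close>)
qed

lemma exp_inv_poly_has_derivative_0:
  "(exp_inv_poly p has_real_derivative exp_inv_poly (exp_inv_poly_deriv p) 0) (at 0)"
proof -
  have "((\<lambda>y. exp_inv_poly p y / y) \<longlongrightarrow> 0) (at_left (0::real))"
  proof (rule tendsto_eventually)
    show "\<forall>\<^sub>F y in at_left (0::real). exp_inv_poly p y / y = 0"
      by (simp add: eventually_at_filter exp_inv_poly_def)
  qed
  moreover have "((\<lambda>y. exp_inv_poly p y / y) \<longlongrightarrow> 0) (at_right (0::real))"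
  proof (rule Lim_transform_eventually[OF poly_inverse_mult_exp_tendsto_0[of "pCons 0 p"]])
    show "\<forall>\<^sub>F y in at_right 0. poly (pCons 0 p) (1/y) * exp (-1/y) = exp_inv_poly p y / y"
      by (simp add: eventually_at_filter exp_inv_poly_def)
  qed
  ultimately have "((\<lambda>y. exp_inv_poly p y / y) \<longlongrightarrow> 0) (at (0::real))"
    by (rule filterlim_split_at_real)
  then show ?thesis by (simp add: has_field_derivative_iff exp_inv_poly_def)
qed

lemma exp_inv_poly_has_derivative:
  "(exp_inv_poly p has_real_derivative exp_inv_poly (exp_inv_poly_deriv p) x) (at x)"
proof (cases x "0::real" rule: linorder_cases)
  case less
  have "((\<lambda>t. 0) has_real_derivative exp_inv_poly (exp_inv_poly_deriv p) x) (at x)"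
    using less by (simp add: exp_inv_poly_def)
  then show ?thesis
    by (rule has_field_derivative_transform_within_open[where S="{..<0}"])
       (use less in \<open>auto simp: exp_inv_poly_def\<close>)
qed (use exp_inv_poly_has_derivative_0 exp_inv_poly_has_derivative_pos in auto)

fun n_times_differentiable :: "nat \<Rightarrow> (real \<Rightarrow> real) \<Rightarrow> bool" where
  "n_times_differentiable 0 f = True"
| "n_times_differentiable (Suc n) f \<longleftrightarrow>
     (\<forall>x. f differentiable (at x)) \<and> n_times_differentiable n (deriv f)"

definition infinitely_differentiable :: "(real \<Rightarrow> real) \<Rightarrow> bool" where
  "infinitely_differentiable f \<longleftrightarrow> (\<forall>n. n_times_differentiable n f)"

lemma n_times_differentiable_SucI:
  assumes "\<And>x. (f has_real_derivative f' x) (at x)" "n_times_differentiable n f'"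
  shows "n_times_differentiable (Suc n) f"
proof -
  have "deriv f = f'" using assms(1) by (auto intro: DERIV_imp_deriv)
  then show ?thesis using assms by (auto simp: real_differentiable_def)
qed

lemma n_times_differentiable_SucE:
  assumes "n_times_differentiable (Suc n) f"
  obtains f' where "\<And>x. (f has_real_derivative f' x) (at x)" "n_times_differentiable n f'"
  using assms DERIV_deriv_iff_real_differentiable by auto

lemma n_times_differentiable_Suc_imp: "n_times_differentiable (Suc n) f \<Longrightarrow> n_times_differentiable n f"
  by (induction n arbitrary: f) auto

lemma n_times_differentiable_const: "n_times_differentiable n (\<lambda>x. c)"
  by (induction n arbitrary: c) (auto intro: n_times_differentiable_SucI[where f'="\<lambda>x. 0"])

lemma n_times_differentiable_id: "n_times_differentiable n (\<lambda>x. x)"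
  by (cases n) (auto intro: n_times_differentiable_SucI[where f'="\<lambda>x. 1"] n_times_differentiable_const)

lemma n_times_differentiable_add:
  "n_times_differentiable n f \<Longrightarrow> n_times_differentiable n g \<Longrightarrow> n_times_differentiable n (\<lambda>x. f x + g x)"
proof (induction n arbitrary: f g)
  case (Suc n)
  obtain f' g' where f': "\<And>x. (f has_real_derivative f' x) (at x)" "n_times_differentiable n f'"
    and g': "\<And>x. (g has_real_derivative g' x) (at x)" "n_times_differentiable n g'"
    by (metis Suc.prems n_times_differentiable_SucE)
  have "((\<lambda>x. f x + g x) has_real_derivative f' x + g' x) (at x)" for x
    using f' g' by (auto intro!: derivative_eq_intros)
  then show ?case by (rule n_times_differentiable_SucI) (rule Suc.IH[OF f'(2) g'(2)])
qed simp

lemma n_times_differentiable_mult: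
  "n_times_differentiable n f \<Longrightarrow> n_times_differentiable n g \<Longrightarrow> n_times_differentiable n (\<lambda>x. f x * g x)"
proof (induction n arbitrary: f g)
  case (Suc n)
  obtain f' g' where f': "\<And>x. (f has_real_derivative f' x) (at x)" "n_times_differentiable n f'"
    and g': "\<And>x. (g has_real_derivative g' x) (at x)" "n_times_differentiable n g'"
    by (metis Suc.prems n_times_differentiable_SucE)
  have "n_times_differentiable n f" "n_times_differentiable n g"
    using Suc.prems n_times_differentiable_Suc_imp by auto
  then have "n_times_differentiable n (\<lambda>x. f' x * g x + f x * g' x)"
    by (intro n_times_differentiable_add Suc.IH f'(2) g'(2))
  moreover have "((\<lambda>x. f x * g x) has_real_derivative f' x * g x + f x * g' x) (at x)" for x
    using f' g' by (auto intro!: derivative_eq_intros)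
  ultimately show ?case by (intro n_times_differentiable_SucI)
qed simp

lemma n_times_differentiable_affine:
  "n_times_differentiable n f \<Longrightarrow> n_times_differentiable n (\<lambda>x. f (c * x + d))"
proof (induction n arbitrary: f)
  case (Suc n)
  obtain f' where f': "\<And>x. (f has_real_derivative f' x) (at x)" "n_times_differentiable n f'"
    using Suc.prems n_times_differentiable_SucE by blast
  have "((\<lambda>x. f (c * x + d)) has_real_derivative c * f' (c * x + d)) (at x)" for x
  proof -
    have "((\<lambda>x. c * x + d) has_real_derivative c) (at x)"
      by (auto intro!: derivative_eq_intros)
    from DERIV_chain2[OF f'(1) this] show ?thesis by (simp add: mult.commute)
  qed
  then show ?case
    by (rule n_times_differentiable_SucI)
       (intro n_times_differentiable_mult n_times_differentiable_const Suc.IH f'(2))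
qed simp

lemma n_times_differentiable_exp_inv_poly: "n_times_differentiable n (exp_inv_poly p)"
proof (induction n arbitrary: p)
  case (Suc n)
  show ?case by (rule n_times_differentiable_SucI[OF exp_inv_poly_has_derivative Suc.IH])
qed simp

lemma infinitely_differentiable_mult:
  "infinitely_differentiable f \<Longrightarrow> infinitely_differentiable g \<Longrightarrow> infinitely_differentiable (\<lambda>x. f x * g x)"
  by (simp add: infinitely_differentiable_def n_times_differentiable_mult)

lemma infinitely_differentiable_id: "infinitely_differentiable (\<lambda>x. x)"
  by (simp add: infinitely_differentiable_def n_times_differentiable_id)

lemma infinitely_differentiable_affine:
  "infinitely_differentiable f \<Longrightarrow> infinitely_differentiable (\<lambda>x. f (c * x + d))"
  by (simp add: infinitely_differentiable_def n_times_differentiable_affine)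

lemma infinitely_differentiable_exp_inv_poly: "infinitely_differentiable (exp_inv_poly p)"
  by (simp add: infinitely_differentiable_def n_times_differentiable_exp_inv_poly)

lemma infinitely_differentiable_deriv: "infinitely_differentiable f \<Longrightarrow> infinitely_differentiable (deriv f)"
  by (metis n_times_differentiable.simps(2) infinitely_differentiable_def)

lemma infinitely_differentiable_has_derivative:
  "infinitely_differentiable f \<Longrightarrow> (f has_real_derivative deriv f x) (at x)"
  by (metis n_times_differentiable.simps(2) infinitely_differentiable_def DERIV_deriv_iff_real_differentiable)

lemma infinitely_differentiable_continuous: "infinitely_differentiable f \<Longrightarrow> continuous_on UNIV f"
  by (meson DERIV_isCont continuous_at_imp_continuous_on infinitely_differentiable_has_derivative)

section \<open>The bump profile\<close>

lemma deriv_eq_0_outside: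
  fixes f :: "real \<Rightarrow> real"
  assumes "\<And>t. c < \<bar>t\<bar> \<Longrightarrow> f t = 0" "c < \<bar>x\<bar>"
  shows "deriv f x = 0"
proof -
  have "((\<lambda>t. 0) has_real_derivative 0) (at x)" by simp
  then have "(f has_real_derivative 0) (at x)"
    by (rule has_field_derivative_transform_within_open[where S="{t. c < \<bar>t\<bar>}"])
       (use assms in \<open>auto intro!: open_Collect_less continuous_intros\<close>)
  then show ?thesis by (rule DERIV_imp_deriv)
qed

lemma continuous_vanishing_outside_ball_bounded:
  fixes g :: "'a::{real_normed_vector,heine_borel} \<Rightarrow> real"
  assumes "continuous_on UNIV g" "\<And>x. R < norm x \<Longrightarrow> g x = 0"
  obtains M where "\<And>x. \<bar>g x\<bar> \<le> M"
proof -
  have "compact (g ` cball 0 R)"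
    by (rule compact_continuous_image) (auto intro: continuous_on_subset[OF assms(1)])
  then obtain M where M: "\<And>y. y \<in> g ` cball 0 R \<Longrightarrow> norm y \<le> M"
    using compact_imp_bounded bounded_iff by metis
  have "\<bar>g x\<bar> \<le> max M 0" for x
    using M[of "g x"] assms(2)[of x] by (cases "R < norm x") force+
  then show ?thesis using that by blast
qed

definition bump :: "real \<Rightarrow> real" where
  "bump t = exp_inv_poly 1 (1/2 + t) * exp_inv_poly 1 (1/2 - t)"

text \<open>All that is used of \<open>bump_a\<close> below: it is smooth, vanishes off \<open>[-1/2, 1/2]\<close>,
  has a primitive \<open>bump_B\<close> with the same support, \<open>bump_a 0 > 0\<close> and \<open>bump_a' 0 = 0\<close>.\<close>
definition bump_B :: "real \<Rightarrow> real" where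
  "bump_B t = t * bump t"

definition bump_a :: "real \<Rightarrow> real" where
  "bump_a = deriv bump_B"

definition bump_da :: "real \<Rightarrow> real" where
  "bump_da = deriv bump_a"

lemma infinitely_differentiable_bump: "infinitely_differentiable bump"
  using infinitely_differentiable_mult[OF
      infinitely_differentiable_affine[OF infinitely_differentiable_exp_inv_poly, where c=1 and d="1/2"]
      infinitely_differentiable_affine[OF infinitely_differentiable_exp_inv_poly, where c="-1" and d="1/2"]]
  by (simp add: bump_def[abs_def] add.commute)

lemma infinitely_differentiable_bump_B: "infinitely_differentiable bump_B"
  unfolding bump_B_def[abs_def]
  by (intro infinitely_differentiable_mult infinitely_differentiable_id infinitely_differentiable_bump)

lemma infinitely_differentiable_bump_a: "infinitely_differentiable bump_a"
  unfolding bump_a_def by (intro infinitely_differentiable_deriv infinitely_differentiable_bump_B)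

lemma infinitely_differentiable_bump_da: "infinitely_differentiable bump_da"
  unfolding bump_da_def by (intro infinitely_differentiable_deriv infinitely_differentiable_bump_a)

lemma bump_B_has_derivative: "(bump_B has_real_derivative bump_a t) (at t)"
  unfolding bump_a_def by (rule infinitely_differentiable_has_derivative[OF infinitely_differentiable_bump_B])

lemma bump_a_has_derivative: "(bump_a has_real_derivative bump_da t) (at t)"
  unfolding bump_da_def by (rule infinitely_differentiable_has_derivative[OF infinitely_differentiable_bump_a])

lemma bump_B_eq_0: "1/2 < \<bar>t\<bar> \<Longrightarrow> bump_B t = 0"
  unfolding bump_B_def bump_def exp_inv_poly_def by (cases "0 \<le> t") auto

lemma bump_a_eq_0: "1/2 < \<bar>t\<bar> \<Longrightarrow> bump_a t = 0"
  unfolding bump_a_def by (rule deriv_eq_0_outside[where c="1/2"]) (auto intro: bump_B_eq_0)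

lemma bump_da_eq_0: "1/2 < \<bar>t\<bar> \<Longrightarrow> bump_da t = 0"
  unfolding bump_da_def by (rule deriv_eq_0_outside[OF bump_a_eq_0])

lemma bump_a_eq: "bump_a t = bump t + t * deriv bump t"
proof -
  have "(bump_B has_real_derivative bump t + t * deriv bump t) (at t)"
    unfolding bump_B_def[abs_def]
    by (auto intro!: derivative_eq_intros
        infinitely_differentiable_has_derivative[OF infinitely_differentiable_bump])
  then show ?thesis unfolding bump_a_def by (rule DERIV_imp_deriv)
qed

lemma bump_a_0_pos: "0 < bump_a 0"
  by (simp add: bump_a_eq bump_def exp_inv_poly_def)

lemma bump_da_0: "bump_da 0 = 0"
proof -
  have "deriv bump 0 = 0"
  proof (rule DERIV_imp_deriv)
    let ?h = "exp_inv_poly 1"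
    have "(bump has_real_derivative deriv ?h (1/2) * ?h (1/2) - ?h (1/2) * deriv ?h (1/2)) (at 0)"
      unfolding bump_def[abs_def]
      by (auto intro!: derivative_eq_intros DERIV_chain2[OF
            infinitely_differentiable_has_derivative[OF infinitely_differentiable_exp_inv_poly]])
    then show "(bump has_real_derivative 0) (at 0)" by simp
  qed
  moreover have "(bump_a has_real_derivative deriv bump 0 + (deriv bump 0 + 0 * deriv (deriv bump) 0)) (at 0)"
    unfolding bump_a_eq[abs_def]
    using infinitely_differentiable_bump infinitely_differentiable_deriv[OF infinitely_differentiable_bump]
    by (auto intro!: derivative_eq_intros infinitely_differentiable_has_derivative)
  ultimately show ?thesis unfolding bump_da_def by (simp add: DERIV_imp_deriv)
qed

lemma bump_da_le_linear:
  obtains L where "\<And>t. \<bar>bump_da t\<bar> \<le> L * \<bar>t\<bar>"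
proof -
  have "deriv bump_da x = 0" if "1/2 < norm x" for x
    using that by (intro deriv_eq_0_outside[where c="1/2", OF bump_da_eq_0]) auto
  then obtain L where L: "\<And>x. \<bar>deriv bump_da x\<bar> \<le> L"
    using continuous_vanishing_outside_ball_bounded[OF infinitely_differentiable_continuous[OF
          infinitely_differentiable_deriv[OF infinitely_differentiable_bump_da]]] by blast
  have "norm (bump_da t - bump_da 0) \<le> L * norm (t - 0)" for t
    by (rule field_differentiable_bound[of UNIV])
       (auto intro: L infinitely_differentiable_has_derivative[OF infinitely_differentiable_bump_da])
  then have "\<bar>bump_da t\<bar> \<le> L * \<bar>t\<bar>" for t using bump_da_0 by simp
  then show ?thesis by (rule that)
qed

lemma bump_B_bounded:
  obtains M where "\<And>t. \<bar>bump_B t\<bar> \<le> M"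
  by (rule continuous_vanishing_outside_ball_bounded[of bump_B "1/2"])
     (auto intro: bump_B_eq_0 infinitely_differentiable_continuous infinitely_differentiable_bump_B)

lemma bump_a_ge_near_0:
  obtains \<delta> where "0 < \<delta>" "\<And>t. \<bar>t\<bar> \<le> \<delta> \<Longrightarrow> bump_a 0 / 2 \<le> bump_a t"
proof -
  have "isCont bump_a 0"
    using infinitely_differentiable_continuous[OF infinitely_differentiable_bump_a]
    by (simp add: continuous_on_eq_continuous_at)
  moreover have "0 < bump_a 0 / 2" using bump_a_0_pos by simp
  ultimately obtain \<delta> where \<delta>: "0 < \<delta>" "\<And>t. \<bar>t\<bar> < \<delta> \<Longrightarrow> \<bar>bump_a t - bump_a 0\<bar> < bump_a 0 / 2"
    unfolding continuous_at_eps_delta[where 'a=real] dist_real_def by (metis diff_zero)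
  have "bump_a 0 / 2 \<le> bump_a t" if "\<bar>t\<bar> \<le> \<delta>/2" for t
  proof -
    have "\<bar>t\<bar> < \<delta>" using that \<open>0 < \<delta>\<close> by linarith
    from \<delta>(2)[OF this] show ?thesis by linarith
  qed
  then show ?thesis using that[of "\<delta>/2"] \<open>0 < \<delta>\<close> by simp
qed

section \<open>Squares and tensor sums in the plane\<close>

definition square :: "real^2 \<Rightarrow> real \<Rightarrow> (real^2) set" where
  "square c r = cbox (c - vec r) (c + vec r)"

lemma mem_square: "x \<in> square c r \<longleftrightarrow> \<bar>x$1 - c$1\<bar> \<le> r \<and> \<bar>x$2 - c$2\<bar> \<le> r"
  unfolding square_def mem_box_cart forall_2 by auto

lemma compact_square: "compact (square c r)"
  by (simp add: square_def)

lemma integrable_indicator_square: "integrable lborel (indicator (square c r) :: real^2 \<Rightarrow> real)"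
  unfolding square_def by (intro integrable_real_indicator emeasure_lborel_cbox_finite) simp

lemma measure_square:
  assumes "0 \<le> r"
  shows "measure lborel (square c r) = 4 * r^2"
proof -
  have "c \<in> square c r" using assms by (simp add: mem_square)
  then have "square c r \<noteq> {}" by blast
  then show ?thesis
    unfolding square_def by (simp add: content_cbox_cart UNIV_2 power2_eq_square)
qed

lemma square_subset_unit_disk:
  assumes "(\<bar>c$1\<bar> + r)^2 + (\<bar>c$2\<bar> + r)^2 < 1"
  shows "square c r \<subseteq> unit_disk"
proof
  fix x assume "x \<in> square c r"
  then have "\<bar>x$1\<bar> \<le> \<bar>c$1\<bar> + r" "\<bar>x$2\<bar> \<le> \<bar>c$2\<bar> + r"
    by (auto simp: mem_square)
  then have "\<bar>x$1\<bar>^2 \<le> (\<bar>c$1\<bar> + r)^2" "\<bar>x$2\<bar>^2 \<le> (\<bar>c$2\<bar> + r)^2"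
    by (metis abs_ge_zero power_mono)+
  then have "(x$1)^2 + (x$2)^2 < 1" using assms by simp
  then show "x \<in> unit_disk"
    by (simp add: unit_disk_def norm_vec_def L2_set_def sum_2)
qed

definition tensor_sum ::
    "nat \<Rightarrow> (nat \<Rightarrow> real \<Rightarrow> real) \<Rightarrow> (nat \<Rightarrow> real \<Rightarrow> real) \<Rightarrow> real^2 \<Rightarrow> real" where
  "tensor_sum N p q x = (\<Sum>k<N. p k (x$1) * q k (x$2))"

lemma tensor_sum_has_derivative_1:
  assumes "\<And>k x. (p k has_real_derivative p' k x) (at x)"
  shows "((\<lambda>t. tensor_sum N p q (x + t *\<^sub>R axis 1 1)) has_real_derivative tensor_sum N p' q x) (at 0)"
proof -
  have "((\<lambda>t. p k (x$1 + t) * q k (x$2)) has_real_derivative p' k (x$1) * q k (x$2)) (at 0)" for k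
  proof -
    have "((\<lambda>t. x$1 + t) has_real_derivative 1) (at 0)" by (auto intro!: derivative_eq_intros)
    from DERIV_chain2[OF assms this] show ?thesis by (auto intro!: derivative_eq_intros)
  qed
  then show ?thesis
    unfolding tensor_sum_def by (simp add: axis_def DERIV_sum)
qed

lemma tensor_sum_has_derivative_2:
  assumes "\<And>k x. (q k has_real_derivative q' k x) (at x)"
  shows "((\<lambda>t. tensor_sum N p q (x + t *\<^sub>R axis 2 1)) has_real_derivative tensor_sum N p q' x) (at 0)"
proof -
  have "((\<lambda>t. p k (x$1) * q k (x$2 + t)) has_real_derivative p k (x$1) * q' k (x$2)) (at 0)" for k
  proof -
    have "((\<lambda>t. x$2 + t) has_real_derivative 1) (at 0)" by (auto intro!: derivative_eq_intros)
    from DERIV_chain2[OF assms this] show ?thesis by (auto intro!: derivative_eq_intros)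
  qed
  then show ?thesis
    unfolding tensor_sum_def by (simp add: axis_def DERIV_sum)
qed

lemma pd_tensor_sum_1:
  "(\<And>k x. (p k has_real_derivative p' k x) (at x)) \<Longrightarrow> pd 1 (tensor_sum N p q) = tensor_sum N p' q"
  by (auto simp: pd_def DERIV_imp_deriv tensor_sum_has_derivative_1)

lemma pd_tensor_sum_2:
  "(\<And>k x. (q k has_real_derivative q' k x) (at x)) \<Longrightarrow> pd 2 (tensor_sum N p q) = tensor_sum N p q'"
  by (auto simp: pd_def DERIV_imp_deriv tensor_sum_has_derivative_2)

lemma iter_pd_tensor_sum:
  assumes "\<And>k. infinitely_differentiable (p k)" "\<And>k. infinitely_differentiable (q k)"
  shows "\<exists>p' q'. (\<forall>k. infinitely_differentiable (p' k)) \<and> (\<forall>k. infinitely_differentiable (q' k)) \<and>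
           iter_pd is (tensor_sum N p q) = tensor_sum N p' q'"
proof (induction "is")
  case Nil
  show ?case using assms by (intro exI[of _ p] exI[of _ q]) simp
next
  case (Cons i "is")
  then obtain p' q' where p': "\<And>k. infinitely_differentiable (p' k)"
    and q': "\<And>k. infinitely_differentiable (q' k)"
    and eq: "iter_pd is (tensor_sum N p q) = tensor_sum N p' q'"
    by blast
  have "i = 1 \<or> i = 2" by (rule exhaust_2)
  then show ?case
  proof
    assume "i = 1"
    then have "iter_pd (i # is) (tensor_sum N p q) = tensor_sum N (\<lambda>k. deriv (p' k)) q'"
      by (simp add: eq pd_tensor_sum_1 infinitely_differentiable_has_derivative[OF p'])
    then show ?case
      by (intro exI[of _ "\<lambda>k. deriv (p' k)"] exI[of _ q']) (simp add: infinitely_differentiable_deriv p' q')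
  next
    assume "i = 2"
    then have "iter_pd (i # is) (tensor_sum N p q) = tensor_sum N p' (\<lambda>k. deriv (q' k))"
      by (simp add: eq pd_tensor_sum_2 infinitely_differentiable_has_derivative[OF q'])
    then show ?case
      by (intro exI[of _ p'] exI[of _ "\<lambda>k. deriv (q' k)"]) (simp add: infinitely_differentiable_deriv p' q')
  qed
qed

lemma continuous_on_tensor_sum:
  assumes "\<And>k. continuous_on UNIV (p k)" "\<And>k. continuous_on UNIV (q k)"
  shows "continuous_on UNIV (tensor_sum N p q)"
proof -
  have "continuous_on UNIV (\<lambda>x::real^2. p k (x$1))" "continuous_on UNIV (\<lambda>x::real^2. q k (x$2))" for k
    by (auto intro!: continuous_on_compose2[OF assms(1)] continuous_on_compose2[OF assms(2)]
        continuous_intros)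
  then show ?thesis unfolding tensor_sum_def[abs_def] by (auto intro!: continuous_intros)
qed

lemma smooth_tensor_sum:
  assumes "\<And>k. infinitely_differentiable (p k)" "\<And>k. infinitely_differentiable (q k)"
  shows "smooth (tensor_sum N p q)"
  unfolding smooth_def
proof (intro allI conjI)
  fix "is" :: "2 list" and i :: 2 and x :: "real^2"
  obtain p' q' where p': "\<And>k. infinitely_differentiable (p' k)"
    and q': "\<And>k. infinitely_differentiable (q' k)"
    and eq: "iter_pd is (tensor_sum N p q) = tensor_sum N p' q'"
    using iter_pd_tensor_sum[of p q "is" N] assms by blast
  show "continuous_on UNIV (iter_pd is (tensor_sum N p q))"
    unfolding eq by (intro continuous_on_tensor_sum infinitely_differentiable_continuous p' q')
  have "((\<lambda>t. tensor_sum N p' q' (x + t *\<^sub>R axis 1 1)) has_real_derivative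
      tensor_sum N (\<lambda>k. deriv (p' k)) q' x) (at 0)"
    by (rule tensor_sum_has_derivative_1) (rule infinitely_differentiable_has_derivative[OF p'])
  moreover have "((\<lambda>t. tensor_sum N p' q' (x + t *\<^sub>R axis 2 1)) has_real_derivative
      tensor_sum N p' (\<lambda>k. deriv (q' k)) x) (at 0)"
    by (rule tensor_sum_has_derivative_2) (rule infinitely_differentiable_has_derivative[OF q'])
  moreover have "i = 1 \<or> i = 2" by (rule exhaust_2)
  ultimately show "(\<lambda>t. iter_pd is (tensor_sum N p q) (x + t *\<^sub>R axis i 1)) differentiable at 0"
    unfolding eq real_differentiable_def by blast
qed

lemma test_fun_tensor_sum:
  assumes "\<And>k. infinitely_differentiable (p k)" "\<And>k. infinitely_differentiable (q k)"
    and "\<And>k t. 1/2 < \<bar>t\<bar> \<Longrightarrow> p k t = 0" "\<And>k t. 1/2 < \<bar>t\<bar> \<Longrightarrow> q k t = 0"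
  shows "test_fun unit_disk (tensor_sum N p q)"
  unfolding test_fun_def
proof (intro conjI exI[of _ "square 0 (1/2)"])
  show "smooth (tensor_sum N p q)" by (rule smooth_tensor_sum[OF assms(1,2)])
  show "square 0 (1/2) \<subseteq> unit_disk" by (rule square_subset_unit_disk) (simp add: power2_eq_square)
  show "\<forall>x. x \<notin> square 0 (1/2) \<longrightarrow> tensor_sum N p q x = 0"
    using assms(3,4) by (auto simp: mem_square tensor_sum_def)
qed (rule compact_square)

section \<open>Ornstein's test functions\<close>

text \<open>Since \<open>|g t| \<le> L|t|\<close>, the terms with \<open>2\<^sup>k |y| < 1\<close> form a geometric series.\<close>
lemma sum_abs_dyadic_le:
  fixes g :: "real \<Rightarrow> real"
  assumes "\<And>t. \<bar>g t\<bar> \<le> L * \<bar>t\<bar>" "\<And>t. 1 \<le> \<bar>t\<bar> \<Longrightarrow> g t = 0"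
  shows "(\<Sum>k<N. \<bar>g (2^k * y)\<bar>) \<le> 2 * L"
proof -
  have "0 \<le> L" using assms(1)[of 1] by simp
  have "(\<Sum>k<N. \<bar>g (2^k * y)\<bar>) \<le> L * min (2^N * \<bar>y\<bar>) 2"
  proof (induction N)
    case (Suc N)
    show ?case
    proof (cases "2^N * \<bar>y\<bar> < 1")
      case True
      have "\<bar>g (2^N * y)\<bar> \<le> L * (2^N * \<bar>y\<bar>)" using assms(1)[of "2^N * y"] by (simp add: abs_mult)
      moreover have "L * min (2^N * \<bar>y\<bar>) 2 \<le> L * (2^N * \<bar>y\<bar>)"
        using \<open>0 \<le> L\<close> by (intro mult_left_mono) auto
      moreover have "min (2^Suc N * \<bar>y\<bar>) 2 = 2 * (2^N * \<bar>y\<bar>)" using True by simp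
      ultimately show ?thesis using Suc by (simp add: algebra_simps)
    next
      case False
      then have "g (2^N * y) = 0" by (intro assms(2)) (simp add: abs_mult)
      moreover have "L * min (2^N * \<bar>y\<bar>) 2 \<le> L * min (2^Suc N * \<bar>y\<bar>) 2"
        using \<open>0 \<le> L\<close> False by (intro mult_left_mono) (auto simp: min_def)
      ultimately show ?thesis using Suc by simp
    qed
  qed (use \<open>0 \<le> L\<close> in simp)
  also have "\<dots> \<le> L * 2" using \<open>0 \<le> L\<close> by (intro mult_left_mono) auto
  finally show ?thesis by simp
qed

lemma has_real_derivative_dilate:
  assumes "\<And>t. (f has_real_derivative f' t) (at t)"
  shows "((\<lambda>t. f (c * t)) has_real_derivative c * f' (c * t)) (at t)"
proof -
  have "((\<lambda>t. c * t) has_real_derivative c) (at t)" by (auto intro!: derivative_eq_intros)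
  from DERIV_chain2[OF assms this] show ?thesis by (simp add: mult.commute)
qed

lemma infinitely_differentiable_dilate:
  "infinitely_differentiable f \<Longrightarrow> infinitely_differentiable (\<lambda>t. f (c * t))"
  using infinitely_differentiable_affine[where d=0] by simp

lemma dyadic_dilate_eq_0:
  fixes f :: "real \<Rightarrow> real"
  assumes "\<And>t. 1/2 < \<bar>t\<bar> \<Longrightarrow> f t = 0" "1/2 < \<bar>t\<bar>"
  shows "f (2^k * t) = 0"
proof (rule assms(1))
  have "\<bar>t\<bar> \<le> 2^k * \<bar>t\<bar>" using one_le_power[of "2::real" k] by (simp add: mult_le_cancel_right1)
  then show "1/2 < \<bar>2^k * t\<bar>" using assms(2) by (simp add: abs_mult)
qed

definition ornstein_psi :: "nat \<Rightarrow> real^2 \<Rightarrow> real" where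
  "ornstein_psi N = tensor_sum N (\<lambda>k t. bump_a (2^k * t)) (\<lambda>k t. bump_a (2^k * t))"

definition ornstein_G1 :: "nat \<Rightarrow> real^2 \<Rightarrow> real" where
  "ornstein_G1 N = tensor_sum N (\<lambda>k t. bump_da (2^k * t)) (\<lambda>k t. bump_B (2^k * t))"

definition ornstein_G2 :: "nat \<Rightarrow> real^2 \<Rightarrow> real" where
  "ornstein_G2 N = tensor_sum N (\<lambda>k t. bump_B (2^k * t)) (\<lambda>k t. bump_da (2^k * t))"

lemma pd_ornstein_psi_1: "pd 1 (ornstein_psi N) = pd 2 (ornstein_G1 N)"
proof -
  have "pd 1 (ornstein_psi N) = tensor_sum N (\<lambda>k t. 2^k * bump_da (2^k * t)) (\<lambda>k t. bump_a (2^k * t))"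
    unfolding ornstein_psi_def
    by (rule pd_tensor_sum_1) (rule has_real_derivative_dilate[OF bump_a_has_derivative])
  moreover have "pd 2 (ornstein_G1 N) = tensor_sum N (\<lambda>k t. bump_da (2^k * t)) (\<lambda>k t. 2^k * bump_a (2^k * t))"
    unfolding ornstein_G1_def
    by (rule pd_tensor_sum_2) (rule has_real_derivative_dilate[OF bump_B_has_derivative])
  ultimately show ?thesis by (simp add: fun_eq_iff tensor_sum_def mult_ac)
qed

lemma pd_ornstein_psi_2: "pd 2 (ornstein_psi N) = pd 1 (ornstein_G2 N)"
proof -
  have "pd 2 (ornstein_psi N) = tensor_sum N (\<lambda>k t. bump_a (2^k * t)) (\<lambda>k t. 2^k * bump_da (2^k * t))"
    unfolding ornstein_psi_def
    by (rule pd_tensor_sum_2) (rule has_real_derivative_dilate[OF bump_a_has_derivative])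
  moreover have "pd 1 (ornstein_G2 N) = tensor_sum N (\<lambda>k t. 2^k * bump_a (2^k * t)) (\<lambda>k t. bump_da (2^k * t))"
    unfolding ornstein_G2_def
    by (rule pd_tensor_sum_1) (rule has_real_derivative_dilate[OF bump_B_has_derivative])
  ultimately show ?thesis by (simp add: fun_eq_iff tensor_sum_def mult_ac)
qed

lemma test_fun_ornstein_psi: "test_fun unit_disk (ornstein_psi N)"
  unfolding ornstein_psi_def
  by (rule test_fun_tensor_sum)
     (auto intro: infinitely_differentiable_dilate infinitely_differentiable_bump_a
        dyadic_dilate_eq_0 bump_a_eq_0)

lemma test_fun_ornstein_G1: "test_fun unit_disk (ornstein_G1 N)"
  unfolding ornstein_G1_def
  by (rule test_fun_tensor_sum)
     (auto intro: infinitely_differentiable_dilate infinitely_differentiable_bump_da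
        infinitely_differentiable_bump_B dyadic_dilate_eq_0 bump_da_eq_0 bump_B_eq_0)

lemma test_fun_ornstein_G2: "test_fun unit_disk (ornstein_G2 N)"
  unfolding ornstein_G2_def
  by (rule test_fun_tensor_sum)
     (auto intro: infinitely_differentiable_dilate infinitely_differentiable_bump_da
        infinitely_differentiable_bump_B dyadic_dilate_eq_0 bump_da_eq_0 bump_B_eq_0)

lemma ornstein_psi_eq_0:
  assumes "x \<notin> square 0 (1/2)"
  shows "ornstein_psi N x = 0"
proof -
  have "1/2 < \<bar>x$1\<bar> \<or> 1/2 < \<bar>x$2\<bar>" using assms by (auto simp: mem_square)
  then have "bump_a (2^k * x$1) * bump_a (2^k * x$2) = 0" for k
    using dyadic_dilate_eq_0[where f=bump_a, OF bump_a_eq_0] by auto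
  then show ?thesis by (simp add: ornstein_psi_def tensor_sum_def sum.neutral)
qed

lemma ornstein_G_bounded:
  obtains M where "0 \<le> M" "\<And>N x. \<bar>ornstein_G1 N x\<bar> \<le> M" "\<And>N x. \<bar>ornstein_G2 N x\<bar> \<le> M"
proof -
  obtain L where L: "\<And>t. \<bar>bump_da t\<bar> \<le> L * \<bar>t\<bar>" using bump_da_le_linear by blast
  obtain K where K: "\<And>t. \<bar>bump_B t\<bar> \<le> K" using bump_B_bounded by blast
  have "0 \<le> K" using K[of 0] by simp
  have bound: "\<bar>\<Sum>k<N. bump_da (2^k * y) * bump_B (2^k * z)\<bar> \<le> 2 * L * K" for N y z
  proof -
    have "\<bar>\<Sum>k<N. bump_da (2^k * y) * bump_B (2^k * z)\<bar> \<le> (\<Sum>k<N. \<bar>bump_da (2^k * y)\<bar> * K)"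
      by (rule order_trans[OF sum_abs sum_mono]) (simp add: abs_mult mult_left_mono K)
    also have "\<dots> = (\<Sum>k<N. \<bar>bump_da (2^k * y)\<bar>) * K" by (simp add: sum_distrib_right)
    also have "\<dots> \<le> 2 * L * K"
      using sum_abs_dyadic_le[OF L, where N=N and y=y] bump_da_eq_0 \<open>0 \<le> K\<close>
      by (intro mult_right_mono) auto
    finally show ?thesis .
  qed
  have "0 \<le> 2 * L * K" using bound[where N=0] by simp
  moreover have "\<bar>ornstein_G1 N x\<bar> \<le> 2 * L * K" "\<bar>ornstein_G2 N x\<bar> \<le> 2 * L * K" for N x
    using bound[where N=N and y="x$1" and z="x$2"] bound[where N=N and y="x$2" and z="x$1"]
    by (simp_all add: ornstein_G1_def ornstein_G2_def tensor_sum_def mult.commute)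
  ultimately show ?thesis by (rule that)
qed

lemma ornstein_psi_ge:
  obtains c \<delta> where "0 < c" "0 < \<delta>"
    "\<And>N x. x \<in> square 0 (\<delta> / 2^N) \<Longrightarrow> real N * c \<le> ornstein_psi N x"
proof -
  obtain \<delta> where "0 < \<delta>" and \<delta>: "\<And>t. \<bar>t\<bar> \<le> \<delta> \<Longrightarrow> bump_a 0 / 2 \<le> bump_a t"
    using bump_a_ge_near_0 by blast
  have a: "bump_a 0 / 2 \<le> bump_a (2^k * s)" if "k < N" "\<bar>s\<bar> \<le> \<delta> / 2^N" for k N s
  proof (rule \<delta>)
    have "(2::real)^k \<le> 2^N" using that(1) by (intro power_increasing) auto
    then have "2^k * \<bar>s\<bar> \<le> 2^N * (\<delta> / 2^N)"
      using that(2) by (intro mult_mono) auto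
    then show "\<bar>2^k * s\<bar> \<le> \<delta>" by (simp add: abs_mult)
  qed
  have "real N * (bump_a 0 / 2)^2 \<le> ornstein_psi N x" if "x \<in> square 0 (\<delta> / 2^N)" for N x
  proof -
    have "(\<Sum>k<N. (bump_a 0 / 2)^2) \<le> (\<Sum>k<N. bump_a (2^k * x$1) * bump_a (2^k * x$2))"
    proof (rule sum_mono)
      fix k assume "k \<in> {..<N}"
      then have "bump_a 0 / 2 \<le> bump_a (2^k * x$1)" "bump_a 0 / 2 \<le> bump_a (2^k * x$2)"
        using that a[of k N "x$1"] a[of k N "x$2"] by (simp_all add: mem_square)
      then show "(bump_a 0 / 2)^2 \<le> bump_a (2^k * x$1) * bump_a (2^k * x$2)"
        using bump_a_0_pos unfolding power2_eq_square by (intro mult_mono) auto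
    qed
    then show ?thesis by (simp add: ornstein_psi_def tensor_sum_def)
  qed
  moreover have "0 < (bump_a 0 / 2)^2" using bump_a_0_pos by simp
  ultimately show ?thesis using that \<open>0 < \<delta>\<close> by blast
qed

section \<open>Pairing a divergence with a test function\<close>

lemma test_fun_continuous: "test_fun D \<phi> \<Longrightarrow> continuous_on UNIV \<phi>"
  unfolding test_fun_def smooth_def by (metis iter_pd.simps(1))

lemma test_fun_bounded:
  assumes "test_fun D \<phi>"
  obtains B where "\<And>x. \<bar>\<phi> x\<bar> \<le> B"
proof -
  obtain K where "compact K" and K: "\<And>x. x \<notin> K \<Longrightarrow> \<phi> x = 0"
    using assms unfolding test_fun_def by blast
  then obtain R where "\<And>x. x \<in> K \<Longrightarrow> norm x \<le> R"
    using compact_imp_bounded bounded_iff by metis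
  then have "\<phi> x = 0" if "R < norm x" for x
    using K that by force
  then show ?thesis
    using continuous_vanishing_outside_ball_bounded[OF test_fun_continuous[OF assms]] that by blast
qed

lemma W11_wpd:
  assumes "W11 D u"
  shows "set_integrable lborel D (wpd D u i)" "weak_pd D u i (wpd D u i)"
proof -
  have "\<exists>g. set_integrable lborel D g \<and> weak_pd D u i g" using assms unfolding W11_def by blast
  from someI_ex[OF this] show "set_integrable lborel D (wpd D u i)" "weak_pd D u i (wpd D u i)"
    unfolding wpd_def by auto
qed

lemma L1_norm_nonneg: "0 \<le> L1_norm D f"
  unfolding L1_norm_def set_lebesgue_integral_def
  by (rule integral_nonneg_AE) (auto simp: indicator_def)

lemma L1_norm_wpd_le_W11_norm: "L1_norm D (wpd D u i) \<le> W11_norm D u"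
proof -
  have "W11_norm D u = L1_norm D u + (L1_norm D (wpd D u 1) + L1_norm D (wpd D u 2))"
    unfolding W11_norm_def by (simp add: sum_2)
  moreover have "i = 1 \<or> i = 2" by (rule exhaust_2)
  ultimately show ?thesis
    using L1_norm_nonneg[of D u] L1_norm_nonneg[of D "wpd D u 1"] L1_norm_nonneg[of D "wpd D u 2"]
    by auto
qed

lemma set_integrable_mult_bounded_continuous:
  fixes g \<phi> :: "'a::euclidean_space \<Rightarrow> real"
  assumes g: "set_integrable lborel D g" and "continuous_on UNIV \<phi>" and B: "\<And>x. \<bar>\<phi> x\<bar> \<le> B"
  shows "set_integrable lborel D (\<lambda>x. g x * \<phi> x)"
proof (rule set_integrable_bound)
  show "set_integrable lborel D (\<lambda>x. g x * B)" using g by simp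
  have "(\<lambda>x. indicator D x *\<^sub>R g x) \<in> borel_measurable lborel"
    using g unfolding set_integrable_def by auto
  moreover have "\<phi> \<in> borel_measurable lborel"
    using borel_measurable_continuous_onI[OF assms(2)] by simp
  ultimately have "(\<lambda>x. indicator D x *\<^sub>R g x * \<phi> x) \<in> borel_measurable lborel"
    by measurable
  then show "set_borel_measurable lborel D (\<lambda>x. g x * \<phi> x)"
    unfolding set_borel_measurable_def by (simp add: mult.assoc)
  have "\<bar>g x\<bar> * \<bar>\<phi> x\<bar> \<le> \<bar>g x\<bar> * \<bar>B\<bar>" for x
    using B[of x] by (intro mult_left_mono) auto
  then show "AE x in lborel. x \<in> D \<longrightarrow> norm (g x * \<phi> x) \<le> norm (g x * B)"
    by (simp add: abs_mult)
qed

lemma abs_set_integral_mult_le: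
  fixes w G :: "real^2 \<Rightarrow> real"
  assumes w: "set_integrable lborel D w" and "continuous_on UNIV G" and G: "\<And>x. \<bar>G x\<bar> \<le> M"
  shows "\<bar>LINT x:D|lborel. w x * G x\<bar> \<le> M * L1_norm D w"
proof -
  have wG: "set_integrable lborel D (\<lambda>x. w x * G x)"
    by (rule set_integrable_mult_bounded_continuous[OF w assms(2) G])
  have "\<bar>LINT x:D|lborel. w x * G x\<bar> \<le> (LINT x:D|lborel. \<bar>w x * G x\<bar>)"
    using set_integral_norm_bound[OF wG] by simp
  also have "\<dots> \<le> (LINT x:D|lborel. M * \<bar>w x\<bar>)"
  proof (rule set_integral_mono)
    show "set_integrable lborel D (\<lambda>x. \<bar>w x * G x\<bar>)" using set_integrable_abs[OF wG] .
    show "set_integrable lborel D (\<lambda>x. M * \<bar>w x\<bar>)" using set_integrable_abs[OF w] by simp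
    show "\<bar>w x * G x\<bar> \<le> M * \<bar>w x\<bar>" for x
      using mult_left_mono[OF G[of x], of "\<bar>w x\<bar>"] by (simp add: abs_mult mult.commute)
  qed
  also have "\<dots> = M * L1_norm D w" unfolding L1_norm_def by simp
  finally show ?thesis .
qed

lemma set_integral_wpd_mult_swap:
  assumes "W11 D v" "test_fun D \<phi>" "test_fun D \<eta>" "pd i \<phi> = pd j \<eta>"
  shows "(LINT x:D|lborel. wpd D v i x * \<phi> x) = (LINT x:D|lborel. wpd D v j x * \<eta> x)"
proof -
  have "(LINT x:D|lborel. v x * pd i \<phi> x) = - (LINT x:D|lborel. wpd D v i x * \<phi> x)"
    using W11_wpd(2)[OF assms(1), of i] assms(2) unfolding weak_pd_def by blast
  moreover have "(LINT x:D|lborel. v x * pd j \<eta> x) = - (LINT x:D|lborel. wpd D v j x * \<eta> x)"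
    using W11_wpd(2)[OF assms(1), of j] assms(3) unfolding weak_pd_def by blast
  ultimately show ?thesis using assms(4) by simp
qed

lemma set_integral_divergence_mult_test:
  fixes u :: "real^2 \<Rightarrow> real^2"
  assumes W: "\<And>j. W11 D (\<lambda>x. u x $ j)"
    and div: "AE x in lborel. x \<in> D \<longrightarrow> (\<Sum>j\<in>UNIV. wpd D (\<lambda>y. u y $ j) j x) = F x"
    and F: "set_integrable lborel D F" and \<psi>: "test_fun D \<psi>"
  shows "(LINT x:D|lborel. F x * \<psi> x) =
    (LINT x:D|lborel. wpd D (\<lambda>y. u y $ 1) 1 x * \<psi> x) + (LINT x:D|lborel. wpd D (\<lambda>y. u y $ 2) 2 x * \<psi> x)"
proof -
  obtain B where B: "\<And>x. \<bar>\<psi> x\<bar> \<le> B" using test_fun_bounded[OF \<psi>] by blast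
  have int: "set_integrable lborel D (\<lambda>x. g x * \<psi> x)" if "set_integrable lborel D g" for g
    by (rule set_integrable_mult_bounded_continuous[OF that test_fun_continuous[OF \<psi>] B])
  let ?w = "\<lambda>j. wpd D (\<lambda>y. u y $ j) j"
  have w: "set_integrable lborel D (\<lambda>x. ?w j x * \<psi> x)" for j by (intro int W11_wpd(1)[OF W])
  have "(LINT x:D|lborel. F x * \<psi> x) = (LINT x:D|lborel. ?w 1 x * \<psi> x + ?w 2 x * \<psi> x)"
    unfolding set_lebesgue_integral_def
  proof (rule integral_cong_AE)
    show "(\<lambda>x. indicator D x *\<^sub>R (F x * \<psi> x)) \<in> borel_measurable lborel"
      using int[OF F] unfolding set_integrable_def by auto
    show "(\<lambda>x. indicator D x *\<^sub>R (?w 1 x * \<psi> x + ?w 2 x * \<psi> x)) \<in> borel_measurable lborel"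
      using set_integral_add(1)[OF w w] unfolding set_integrable_def by auto
    show "AE x in lborel. indicator D x *\<^sub>R (F x * \<psi> x) = indicator D x *\<^sub>R (?w 1 x * \<psi> x + ?w 2 x * \<psi> x)"
      using div by eventually_elim (auto simp: sum_2 indicator_def simp flip: distrib_right)
  qed
  then show ?thesis by (simp add: set_integral_add(2)[OF w w])
qed

lemma abs_set_integral_divergence_mult_test_le:
  fixes u :: "real^2 \<Rightarrow> real^2"
  assumes W: "\<And>j. W11 D (\<lambda>x. u x $ j)"
    and div: "AE x in lborel. x \<in> D \<longrightarrow> (\<Sum>j\<in>UNIV. wpd D (\<lambda>y. u y $ j) j x) = F x"
    and F: "set_integrable lborel D F"
    and \<psi>: "test_fun D \<psi>" and G1: "test_fun D G1" and G2: "test_fun D G2"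
    and "pd 1 \<psi> = pd 2 G1" "pd 2 \<psi> = pd 1 G2"
    and "\<And>x. \<bar>G1 x\<bar> \<le> M" "\<And>x. \<bar>G2 x\<bar> \<le> M"
  shows "\<bar>LINT x:D|lborel. F x * \<psi> x\<bar> \<le> M * (\<Sum>j\<in>UNIV. W11_norm D (\<lambda>x. u x $ j))"
proof -
  let ?u = "\<lambda>j x. u x $ j"
  have "0 \<le> M" using assms(9)[of 0] by simp
  have "(LINT x:D|lborel. F x * \<psi> x) =
      (LINT x:D|lborel. wpd D (?u 1) 2 x * G1 x) + (LINT x:D|lborel. wpd D (?u 2) 1 x * G2 x)"
    using set_integral_divergence_mult_test[OF W div F \<psi>]
      set_integral_wpd_mult_swap[OF W \<psi> G1 assms(7)] set_integral_wpd_mult_swap[OF W \<psi> G2 assms(8)]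
    by simp
  also have "\<bar>\<dots>\<bar> \<le> M * L1_norm D (wpd D (?u 1) 2) + M * L1_norm D (wpd D (?u 2) 1)"
    using abs_set_integral_mult_le[OF W11_wpd(1)[OF W] test_fun_continuous[OF G1] assms(9)]
      abs_set_integral_mult_le[OF W11_wpd(1)[OF W] test_fun_continuous[OF G2] assms(10)]
    by (intro order_trans[OF abs_triangle_ineq add_mono])
  also have "\<dots> \<le> M * W11_norm D (?u 1) + M * W11_norm D (?u 2)"
    using \<open>0 \<le> M\<close> by (intro add_mono mult_left_mono L1_norm_wpd_le_W11_norm)
  finally show ?thesis by (simp add: sum_2 distrib_left)
qed

section \<open>The dipole\<close>

text \<open>Equal masses near the origin, where the \<open>ornstein_psi N\<close> are large, and near \<open>(3/4, 0)\<close>,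
  outside their supports.\<close>
definition dipole :: "real \<Rightarrow> real^2 \<Rightarrow> real" where
  "dipole r x = indicator (square 0 r) x - indicator (square (axis 1 (3/4)) r) x"

lemma dipole_squares_subset_unit_disk:
  assumes "0 \<le> r" "r \<le> 1/8"
  shows "square 0 r \<subseteq> unit_disk" "square (axis 1 (3/4)) r \<subseteq> unit_disk"
proof -
  have "r^2 \<le> (1/8)^2" "(3/4 + r)^2 \<le> (7/8)^2"
    using assms by (intro power_mono; simp)+
  then show "square 0 r \<subseteq> unit_disk" "square (axis 1 (3/4)) r \<subseteq> unit_disk"
    using assms by (intro square_subset_unit_disk; simp add: axis_def power2_eq_square)+
qed

lemma integrable_dipole: "integrable lborel (dipole r)"
  unfolding dipole_def[abs_def]
  by (intro Bochner_Integration.integrable_diff integrable_indicator_square)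

lemma dipole_eq_0_outside_unit_disk:
  assumes "0 \<le> r" "r \<le> 1/8" "x \<notin> unit_disk"
  shows "dipole r x = 0"
  using dipole_squares_subset_unit_disk[OF assms(1,2)] assms(3) by (auto simp: dipole_def indicator_def)

lemma indicator_unit_disk_mult_dipole:
  "0 \<le> r \<Longrightarrow> r \<le> 1/8 \<Longrightarrow> (\<lambda>x. indicator unit_disk x * dipole r x) = dipole r"
  by (auto simp: fun_eq_iff indicator_def dipole_eq_0_outside_unit_disk)

lemma set_integrable_dipole: "0 \<le> r \<Longrightarrow> r \<le> 1/8 \<Longrightarrow> set_integrable lborel unit_disk (dipole r)"
  by (simp add: set_integrable_def indicator_unit_disk_mult_dipole integrable_dipole)

lemma mean_value_dipole:
  assumes "0 \<le> r" "r \<le> 1/8"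
  shows "mean_value unit_disk (dipole r) = 0"
proof -
  have "(LINT x:unit_disk|lborel. dipole r x) = integral\<^sup>L lborel (dipole r)"
    by (simp add: set_lebesgue_integral_def indicator_unit_disk_mult_dipole[OF assms])
  also have "\<dots> = measure lborel (square 0 r) - measure lborel (square (axis 1 (3/4)) r)"
    unfolding dipole_def[abs_def]
    by (simp add: Bochner_Integration.integral_diff integrable_indicator_square)
  also have "\<dots> = 0" using assms by (simp add: measure_square)
  finally show ?thesis by (simp add: mean_value_def)
qed

lemma L1_norm_dipole_le:
  assumes "0 \<le> r" "r \<le> 1/8"
  shows "L1_norm unit_disk (dipole r) \<le> 8 * r^2"
proof -
  have "L1_norm unit_disk (dipole r) = integral\<^sup>L lborel (\<lambda>x. \<bar>dipole r x\<bar>)"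
    unfolding L1_norm_def set_lebesgue_integral_def
    by (rule Bochner_Integration.integral_cong) (auto simp: indicator_def dipole_eq_0_outside_unit_disk[OF assms])
  also have "\<dots> \<le> integral\<^sup>L lborel (\<lambda>x. indicator (square 0 r) x + indicator (square (axis 1 (3/4)) r) x)"
    by (intro Bochner_Integration.integral_mono Bochner_Integration.integrable_add
        integrable_indicator_square integrable_abs integrable_dipole)
       (auto simp: dipole_def indicator_def)
  also have "\<dots> = 8 * r^2"
    using assms by (simp add: Bochner_Integration.integral_add integrable_indicator_square measure_square)
  finally show ?thesis .
qed

lemma set_integral_dipole_mult_ge:
  assumes "0 \<le> r" "r \<le> 1/8" and \<psi>: "test_fun unit_disk \<psi>"
    and ge: "\<And>x. x \<in> square 0 r \<Longrightarrow> a \<le> \<psi> x" and vanish: "\<And>x. x \<notin> square 0 (1/2) \<Longrightarrow> \<psi> x = 0"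
  shows "4 * r^2 * a \<le> (LINT x:unit_disk|lborel. dipole r x * \<psi> x)"
proof -
  let ?S = "square 0 r"
  have "\<psi> x = 0" if "x \<in> square (axis 1 (3/4)) r" for x
    using that assms(2) by (intro vanish) (auto simp: mem_square)
  then have eq: "indicator unit_disk x *\<^sub>R (dipole r x * \<psi> x) = indicator ?S x *\<^sub>R \<psi> x" for x
    using dipole_squares_subset_unit_disk[OF assms(1,2)] by (auto simp: dipole_def indicator_def)
  obtain B where B: "\<And>x. \<bar>\<psi> x\<bar> \<le> B" using test_fun_bounded[OF \<psi>] by blast
  have "set_integrable lborel ?S (\<lambda>x. 1 * \<psi> x)"
    using integrable_indicator_square
    by (intro set_integrable_mult_bounded_continuous[OF _ test_fun_continuous[OF \<psi>] B])
       (simp add: set_integrable_def)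
  then have "(LINT x:?S|lborel. a) \<le> (LINT x:?S|lborel. \<psi> x)"
    using integrable_indicator_square
    by (intro set_integral_mono ge) (simp_all add: set_integrable_def)
  moreover have "(LINT x:?S|lborel. a) = 4 * r^2 * a"
    using assms(1) by (simp add: set_lebesgue_integral_def measure_square)
  moreover have "(LINT x:?S|lborel. \<psi> x) = (LINT x:unit_disk|lborel. dipole r x * \<psi> x)"
    unfolding set_lebesgue_integral_def eq ..
  ultimately show ?thesis by simp
qed

lemma W11_norm_divergence_dipole_ge:
  fixes u :: "real^2 \<Rightarrow> real^2"
  assumes r: "0 \<le> r" "r \<le> 1/8" and psi: "\<And>x. x \<in> square 0 r \<Longrightarrow> a \<le> ornstein_psi N x"
    and G: "\<And>x. \<bar>ornstein_G1 N x\<bar> \<le> M" "\<And>x. \<bar>ornstein_G2 N x\<bar> \<le> M"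
    and W: "\<forall>j. W11 unit_disk (\<lambda>x. u x $ j)"
    and div: "AE x in lborel. x \<in> unit_disk \<longrightarrow> (\<Sum>j\<in>UNIV. wpd unit_disk (\<lambda>y. u y $ j) j x) = dipole r x"
  shows "4 * r^2 * a \<le> M * (\<Sum>j\<in>UNIV. W11_norm unit_disk (\<lambda>x. u x $ j))"
proof -
  have "4 * r^2 * a \<le> (LINT x:unit_disk|lborel. dipole r x * ornstein_psi N x)"
    using r psi by (intro set_integral_dipole_mult_ge test_fun_ornstein_psi ornstein_psi_eq_0)
  also have "\<dots> \<le> \<bar>\<dots>\<bar>" by (rule abs_ge_self)
  also have "\<dots> \<le> M * (\<Sum>j\<in>UNIV. W11_norm unit_disk (\<lambda>x. u x $ j))"
    using W by (intro abs_set_integral_divergence_mult_test_le[OF _ div set_integrable_dipole[OF r]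
        test_fun_ornstein_psi test_fun_ornstein_G1 test_fun_ornstein_G2
        pd_ornstein_psi_1 pd_ornstein_psi_2 G]) simp
  finally show ?thesis .
qed

lemma divergence_solution_bound_fails:
  fixes C :: real
  shows "\<exists>f. set_integrable lborel unit_disk f \<and> (\<forall>u :: real^2 \<Rightarrow> real^2.
     (\<forall>j. W11_0 unit_disk (\<lambda>x. u x $ j)) \<longrightarrow>
     (AE x in lborel. x \<in> unit_disk \<longrightarrow>
        (\<Sum>j\<in>UNIV. wpd unit_disk (\<lambda>y. u y $ j) j x) = f x - mean_value unit_disk f) \<longrightarrow>
     \<not> (\<Sum>j\<in>UNIV. W11_norm unit_disk (\<lambda>x. u x $ j)) \<le> C * L1_norm unit_disk f)"
proof -
  obtain M where "0 \<le> M" and G: "\<And>N x. \<bar>ornstein_G1 N x\<bar> \<le> M" "\<And>N x. \<bar>ornstein_G2 N x\<bar> \<le> M"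
    using ornstein_G_bounded by blast
  obtain c \<delta> where "0 < c" "0 < \<delta>"
    and psi: "\<And>N x. x \<in> square 0 (\<delta> / 2^N) \<Longrightarrow> real N * c \<le> ornstein_psi N x"
    using ornstein_psi_ge by blast
  obtain N :: nat where N: "2 * M * max C 0 < real N * c"
    using ex_less_of_nat_mult[OF \<open>0 < c\<close>] by blast
  define r where "r = min (1/8) (\<delta> / 2^N)"
  have "0 < r" "r \<le> 1/8"
    using \<open>0 < \<delta>\<close> unfolding r_def by (simp_all only: min.cobounded1) simp
  then have r: "0 \<le> r" "r \<le> 1/8" by simp_all
  have "C * L1_norm unit_disk (dipole r) < (\<Sum>j\<in>UNIV. W11_norm unit_disk (\<lambda>x. u x $ j))"
    (is "_ < ?norm")
    if "\<forall>j. W11 unit_disk (\<lambda>x. u x $ j)"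
      and "AE x in lborel. x \<in> unit_disk \<longrightarrow> (\<Sum>j\<in>UNIV. wpd unit_disk (\<lambda>y. u y $ j) j x) = dipole r x"
    for u :: "real^2 \<Rightarrow> real^2"
  proof -
    have "M * (max C 0 * (8 * r^2)) < 4 * r^2 * (real N * c)"
      using N \<open>0 < r\<close> by (simp add: algebra_simps)
    also have "\<dots> \<le> M * ?norm"
      using r psi by (intro W11_norm_divergence_dipole_ge G that) (auto simp: mem_square r_def)
    finally have "max C 0 * (8 * r^2) < ?norm"
      using \<open>0 \<le> M\<close> by (rule mult_left_less_imp_less)
    moreover have "C * L1_norm unit_disk (dipole r) \<le> max C 0 * (8 * r^2)"
      by (intro mult_mono L1_norm_dipole_le[OF r] L1_norm_nonneg) auto
    ultimately show ?thesis by linarith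
  qed
  then show ?thesis
    using set_integrable_dipole[OF r]
    by (intro exI[of _ "dipole r"]) (auto simp: W11_0_def mean_value_dipole[OF r] not_le)
qed

theorem mainTheorem1:
  shows "\<not> (\<exists>C::real. \<forall>f. set_integrable lborel unit_disk f \<longrightarrow>
     (\<exists>u :: real^2 \<Rightarrow> real^2.
        (\<forall>j. W11_0 unit_disk (\<lambda>x. u x $ j)) \<and>
        (AE x in lborel. x \<in> unit_disk \<longrightarrow>
           (\<Sum>j\<in>UNIV. wpd unit_disk (\<lambda>y. u y $ j) j x) = f x - mean_value unit_disk f) \<and>
        (\<Sum>j\<in>UNIV. W11_norm unit_disk (\<lambda>x. u x $ j)) \<le> C * L1_norm unit_disk f))"
  using divergence_solution_bound_fails by meson

end
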